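(* Let $\phi=(\phi_g,X_g,X)_{g\in G}$ be a partial action of a group $G$ on a set $X$ and let $H$ be a normal subgroup of $G$. Then there is an induced partial action $\overline{\phi}$ of $G/H$ on $X$ (with $X_{gH}=\bigcup_{k\in gH}X_k$ and $\overline{\phi}_{gH}(x)=\phi_k(x)$ for $k\in gH$, $x\in X_{k^{-1}}$) if and only if for every $h\in H$, $X_h=X_{h^{-1}}$ and $\phi_h=\operatorname{id}$.
   Context: A partial action of a group $G$ (identity $\varepsilon$) on a set $X$ is $\phi=(\phi_g,X_g,X)_{g\in G}$ with $X_g\subseteq X$ and bijections $\phi_g:X_{g^{-1}}\to X_g$ such that (i) $X_\varepsilon=X$ and $\phi_\varepsilon=\operatorname{id}_X$; (ii) $\phi_g(X_{g^{-1}}\cap X_h)=X_g\cap X_{gh}$ for all $g,h$; (iii) $\phi_g(\phi_h(x))=\phi_{gh}(x)$ for all $g,h$ and $x\in X_{h^{-1}}\cap X_{h^{-1}g^{-1}}$. *)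

theory Defs
  imports "HOL-Algebra.Algebra"
begin

text \<open>Partial action of a group G on a set X: domains D g (= X_g) and maps f g (= phi_g),
  constrained only for g in the carrier and only on the relevant domains.\<close>
definition partial_action ::
  "('g, 'm) monoid_scheme \<Rightarrow> 'x set \<Rightarrow> ('g \<Rightarrow> 'x set) \<Rightarrow> ('g \<Rightarrow> 'x \<Rightarrow> 'x) \<Rightarrow> bool" where
  "partial_action G S D f \<longleftrightarrow>
     (\<forall>g\<in>carrier G. D g \<subseteq> S \<and> bij_betw (f g) (D (m_inv G g)) (D g)) \<and>
     D (one G) = S \<and> (\<forall>x\<in>S. f (one G) x = x) \<and>
     (\<forall>g\<in>carrier G. \<forall>h\<in>carrier G.
        f g ` (D (m_inv G g) \<inter> D h) = D g \<inter> D (monoid.mult G g h)) \<and>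
     (\<forall>g\<in>carrier G. \<forall>h\<in>carrier G.
        \<forall>x\<in>D (m_inv G h) \<inter> D (monoid.mult G (m_inv G h) (m_inv G g)).
          f g (f h x) = f (monoid.mult G g h) x)"

end

theory Submission imports Defs begin

text \<open>If every \<open>f h\<close> with \<open>h \<in> H\<close> is the identity, then for two representatives
  \<open>k\<close> and \<open>k' = h \<otimes> k\<close> of one coset whose domains contain \<open>x\<close>, the composition axiom
  gives \<open>f k' x = f h (f k x) = f k x\<close>. So \<open>f k x\<close> depends only on the coset, and each
  axiom of a partial action of \<open>G Mod H\<close> follows from the same axiom for suitably chosen
  representatives. Conversely, evaluating the induced action at the unit coset \<open>H\<close> forces
  \<open>f h = id\<close> on \<open>D (inv h)\<close>, and then \<open>D h\<close>, the image of \<open>D (inv h)\<close>, equals \<open>D (inv h)\<close>.\<close>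

lemma (in normal) FactGroup_elem_subset:
  "C \<in> carrier (G Mod H) \<Longrightarrow> C \<subseteq> carrier G"
  unfolding carrier_FactGroup using r_coset_subset_G subset by blast

lemma (in normal) FactGroup_elem_rcos_module:
  assumes C: "C \<in> carrier (G Mod H)" and k: "k \<in> C" and k': "k' \<in> C"
  shows "k' \<otimes> inv k \<in> H"
proof -
  obtain a where a: "a \<in> carrier G" and C_eq: "C = H #> a"
    using C unfolding carrier_FactGroup by blast
  have "C = H #> k"
    using repr_independence[OF _ a is_subgroup] k C_eq by simp
  moreover have "k \<in> carrier G"
    using FactGroup_elem_subset[OF C] k by blast
  ultimately show ?thesis
    using rcos_module_imp[OF is_group] k' by simp
qed

lemma (in normal) normal_in_FactGroup: "H \<in> carrier (G Mod H)"
  using subgroup_in_rcosets[OF is_group] unfolding FactGroup_def by simp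

lemma (in normal) FactGroup_inv_eq_image:
  "C \<in> carrier (G Mod H) \<Longrightarrow> inv\<^bsub>G Mod H\<^esub> C = (\<lambda>k. inv k) ` C"
  by (auto simp: inv_FactGroup SET_INV_def)

lemma mult_mem_FactGroup_mult:
  "k \<in> C \<Longrightarrow> m \<in> C' \<Longrightarrow> k \<otimes>\<^bsub>G\<^esub> m \<in> C \<otimes>\<^bsub>G Mod H\<^esub> C'"
  unfolding mult_FactGroup set_mult_def by blast

locale partial_group_action = group G for G (structure) +
  fixes S :: "'x set" and D :: "'a \<Rightarrow> 'x set" and f :: "'a \<Rightarrow> 'x \<Rightarrow> 'x"
  assumes partial_action: "partial_action G S D f"
begin

lemma domain_subset: "g \<in> carrier G \<Longrightarrow> D g \<subseteq> S"
  and act_bij: "g \<in> carrier G \<Longrightarrow> bij_betw (f g) (D (inv g)) (D g)"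
  and domain_one: "D \<one> = S"
  and act_one: "x \<in> S \<Longrightarrow> f \<one> x = x"
  and act_image_inter:
    "g \<in> carrier G \<Longrightarrow> h \<in> carrier G \<Longrightarrow> f g ` (D (inv g) \<inter> D h) = D g \<inter> D (g \<otimes> h)"
  and act_mult:
    "\<lbrakk>g \<in> carrier G; h \<in> carrier G; x \<in> D (inv h); x \<in> D (inv h \<otimes> inv g)\<rbrakk>
     \<Longrightarrow> f g (f h x) = f (g \<otimes> h) x"
  using partial_action unfolding partial_action_def by simp_all

lemma act_mem_domain: "g \<in> carrier G \<Longrightarrow> x \<in> D (inv g) \<Longrightarrow> f g x \<in> D g"
  using act_bij bij_betwE by blast

lemma act_inv_act:
  assumes g: "g \<in> carrier G" and x: "x \<in> D (inv g)"
  shows "f (inv g) (f g x) = x"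
proof -
  have xS: "x \<in> S"
    using domain_subset[OF inv_closed[OF g]] x by blast
  have "inv g \<otimes> inv (inv g) = \<one>"
    using g by simp
  then have "x \<in> D (inv g \<otimes> inv (inv g))"
    using xS domain_one by simp
  then have "f (inv g) (f g x) = f (inv g \<otimes> g) x"
    using act_mult[OF inv_closed[OF g] g x] by simp
  also have "\<dots> = x"
    using g xS act_one by simp
  finally show ?thesis .
qed

lemma domain_eq_if_act_id:
  assumes "g \<in> carrier G" and "\<And>x. x \<in> D (inv g) \<Longrightarrow> f g x = x"
  shows "D g = D (inv g)"
proof -
  have "D g = f g ` D (inv g)"
    using act_bij[OF assms(1)] by (simp add: bij_betw_def)
  also have "\<dots> = D (inv g)"
    using assms(2) by (auto simp: image_iff)
  finally show ?thesis .
qed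

lemma trivial_on_normal_if_induced:
  assumes N: "normal H G" and pa: "partial_action (G Mod H) S E \<psi>"
    and \<psi>: "\<And>k x. k \<in> H \<Longrightarrow> x \<in> D (inv k) \<Longrightarrow> \<psi> H x = f k x"
    and h: "h \<in> H"
  shows "D h = D (inv h) \<and> (\<forall>x\<in>D (inv h). f h x = x)"
proof -
  interpret Q: partial_group_action "G Mod H" S E \<psi>
    using normal.factorgroup_is_group[OF N] pa
    by (intro partial_group_action.intro partial_group_action_axioms.intro)
  have hG: "h \<in> carrier G"
    using subgroup.mem_carrier[OF normal.axioms(1)[OF N] h] .
  have act_id: "f h x = x" if x: "x \<in> D (inv h)" for x
  proof -
    have "x \<in> S"
      using x domain_subset[OF inv_closed[OF hG]] by blast
    then have "\<psi> H x = x"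
      using Q.act_one by simp
    then show ?thesis
      using \<psi>[OF h x] by simp
  qed
  then show ?thesis
    using domain_eq_if_act_id[OF hG] by blast
qed

end

locale partial_action_mod_normal = partial_group_action G S D f + normal H G
  for G (structure) and S :: "'x set" and D f and H +
  assumes normal_act_id: "\<lbrakk>h \<in> H; x \<in> D (inv h)\<rbrakk> \<Longrightarrow> f h x = x"
begin

definition quot_domain :: "'a set \<Rightarrow> 'x set"
  where "quot_domain C = (\<Union>k\<in>C. D k)"

text \<open>The chosen representative is immaterial (\<open>quot_act_eq\<close>); outside
  \<open>quot_domain (inv\<^bsub>G Mod H\<^esub> C)\<close> the value is arbitrary.\<close>

definition quot_act :: "'a set \<Rightarrow> 'x \<Rightarrow> 'x"
  where "quot_act C x = f (SOME k. k \<in> C \<and> x \<in> D (inv k)) x"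

lemma act_eq_if_rcos_module:
  assumes k: "k \<in> carrier G" and k': "k' \<in> carrier G" and hH: "k' \<otimes> inv k \<in> H"
    and x: "x \<in> D (inv k)" and x': "x \<in> D (inv k')"
  shows "f k' x = f k x"
proof -
  define h where "h = k' \<otimes> inv k"
  have h: "h \<in> carrier G"
    using mem_carrier[OF hH] unfolding h_def .
  have k'_eq: "k' = h \<otimes> k"
    using k k' by (simp add: h_def m_assoc)
  have "inv k' = inv k \<otimes> inv h"
    using k'_eq h k by (simp add: inv_mult_group)
  then have "f h (f k x) = f k' x"
    using act_mult[OF h k x] x' k'_eq by simp
  moreover have "f k x \<in> D (inv h)"
  proof -
    have "f k x \<in> D k \<inter> D (k \<otimes> inv k')"
      using act_image_inter[OF k inv_closed[OF k']] x x' by blast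
    moreover have "k \<otimes> inv k' = inv h"
      using k k' by (simp add: h_def inv_mult_group m_assoc)
    ultimately show ?thesis by simp
  qed
  ultimately show ?thesis
    using normal_act_id[OF hH] unfolding h_def by simp
qed

lemma quot_act_eq:
  assumes C: "C \<in> carrier (G Mod H)" and k: "k \<in> C" and x: "x \<in> D (inv k)"
  shows "quot_act C x = f k x"
proof -
  define k0 where "k0 = (SOME k. k \<in> C \<and> x \<in> D (inv k))"
  have k0: "k0 \<in> C" "x \<in> D (inv k0)"
    using someI[of "\<lambda>k. k \<in> C \<and> x \<in> D (inv k)"] k x unfolding k0_def by blast+
  have "f k0 x = f k x"
    using act_eq_if_rcos_module[OF _ _ FactGroup_elem_rcos_module[OF C k k0(1)] x k0(2)]
      FactGroup_elem_subset[OF C] k k0(1) by blast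
  then show ?thesis
    unfolding quot_act_def k0_def .
qed

lemma quot_domain_inv:
  "C \<in> carrier (G Mod H) \<Longrightarrow> quot_domain (inv\<^bsub>G Mod H\<^esub> C) = (\<Union>k\<in>C. D (inv k))"
  by (simp add: FactGroup_inv_eq_image quot_domain_def)

lemma quot_act_mem_domain:
  assumes C: "C \<in> carrier (G Mod H)" and "x \<in> quot_domain (inv\<^bsub>G Mod H\<^esub> C)"
  shows "quot_act C x \<in> quot_domain C"
proof -
  obtain k where k: "k \<in> C" "x \<in> D (inv k)"
    using assms quot_domain_inv by blast
  have "f k x \<in> D k"
    using act_mem_domain[OF _ k(2)] FactGroup_elem_subset[OF C] k(1) by blast
  then show ?thesis
    unfolding quot_act_eq[OF C k] quot_domain_def using k(1) by blast
qed

lemma quot_act_inv_act: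
  assumes C: "C \<in> carrier (G Mod H)" and "x \<in> quot_domain (inv\<^bsub>G Mod H\<^esub> C)"
  shows "quot_act (inv\<^bsub>G Mod H\<^esub> C) (quot_act C x) = x"
proof -
  obtain k where k: "k \<in> C" "x \<in> D (inv k)"
    using assms quot_domain_inv by blast
  have kG: "k \<in> carrier G"
    using k FactGroup_elem_subset[OF C] by blast
  have "f k x \<in> D (inv (inv k))"
    using act_mem_domain[OF kG k(2)] kG by simp
  moreover have "inv k \<in> inv\<^bsub>G Mod H\<^esub> C"
    using FactGroup_inv_eq_image[OF C] k by simp
  ultimately have "quot_act (inv\<^bsub>G Mod H\<^esub> C) (f k x) = f (inv k) (f k x)"
    using quot_act_eq[OF group.inv_closed[OF factorgroup_is_group C]] by blast
  then show ?thesis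
    using quot_act_eq[OF C k] act_inv_act[OF kG k(2)] by simp
qed

lemma quot_act_bij:
  assumes C: "C \<in> carrier (G Mod H)"
  shows "bij_betw (quot_act C) (quot_domain (inv\<^bsub>G Mod H\<^esub> C)) (quot_domain C)"
proof -
  have C': "inv\<^bsub>G Mod H\<^esub> C \<in> carrier (G Mod H)"
    using group.inv_closed[OF factorgroup_is_group C] .
  have C'': "inv\<^bsub>G Mod H\<^esub> (inv\<^bsub>G Mod H\<^esub> C) = C"
    using group.inv_inv[OF factorgroup_is_group C] .
  show ?thesis
  proof (rule bij_betw_byWitness[where f' = "quot_act (inv\<^bsub>G Mod H\<^esub> C)"])
    show "\<forall>x\<in>quot_domain (inv\<^bsub>G Mod H\<^esub> C). quot_act (inv\<^bsub>G Mod H\<^esub> C) (quot_act C x) = x"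
      using quot_act_inv_act[OF C] by blast
    show "\<forall>y\<in>quot_domain C. quot_act C (quot_act (inv\<^bsub>G Mod H\<^esub> C) y) = y"
      using quot_act_inv_act[OF C', unfolded C''] by blast
    show "quot_act C ` quot_domain (inv\<^bsub>G Mod H\<^esub> C) \<subseteq> quot_domain C"
      using quot_act_mem_domain[OF C] by blast
    show "quot_act (inv\<^bsub>G Mod H\<^esub> C) ` quot_domain C \<subseteq> quot_domain (inv\<^bsub>G Mod H\<^esub> C)"
      using quot_act_mem_domain[OF C', unfolded C''] by blast
  qed
qed

lemma quot_act_image_inter:
  assumes C: "C \<in> carrier (G Mod H)" and C': "C' \<in> carrier (G Mod H)"
  shows "quot_act C ` (quot_domain (inv\<^bsub>G Mod H\<^esub> C) \<inter> quot_domain C')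
    = quot_domain C \<inter> quot_domain (C \<otimes>\<^bsub>G Mod H\<^esub> C')"
proof (intro equalityI subsetI)
  fix y assume "y \<in> quot_act C ` (quot_domain (inv\<^bsub>G Mod H\<^esub> C) \<inter> quot_domain C')"
  then obtain x where x: "x \<in> quot_domain (inv\<^bsub>G Mod H\<^esub> C)" "x \<in> quot_domain C'"
    and y: "y = quot_act C x" by blast
  obtain k where k: "k \<in> C" "x \<in> D (inv k)"
    using x(1) quot_domain_inv[OF C] by blast
  obtain m where m: "m \<in> C'" "x \<in> D m"
    using x(2) unfolding quot_domain_def by blast
  have kG: "k \<in> carrier G" and mG: "m \<in> carrier G"
    using k(1) m(1) FactGroup_elem_subset[OF C] FactGroup_elem_subset[OF C'] by blast+
  have "y \<in> D k \<inter> D (k \<otimes> m)"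
    using act_image_inter[OF kG mG] k m unfolding y quot_act_eq[OF C k] by blast
  moreover have "k \<otimes> m \<in> C \<otimes>\<^bsub>G Mod H\<^esub> C'"
    using mult_mem_FactGroup_mult[OF k(1) m(1)] .
  ultimately show "y \<in> quot_domain C \<inter> quot_domain (C \<otimes>\<^bsub>G Mod H\<^esub> C')"
    using k(1) unfolding quot_domain_def by blast
next
  interpret Q: group "G Mod H" by (rule factorgroup_is_group)
  fix y assume "y \<in> quot_domain C \<inter> quot_domain (C \<otimes>\<^bsub>G Mod H\<^esub> C')"
  then obtain k m where k: "k \<in> C" "y \<in> D k" and m: "m \<in> C \<otimes>\<^bsub>G Mod H\<^esub> C'" "y \<in> D m"
    unfolding quot_domain_def by blast
  have CC': "C \<otimes>\<^bsub>G Mod H\<^esub> C' \<in> carrier (G Mod H)"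
    using Q.m_closed[OF C C'] .
  have kG: "k \<in> carrier G" and mG: "m \<in> carrier G"
    using k(1) m(1) FactGroup_elem_subset[OF C] FactGroup_elem_subset[OF CC'] by blast+
  define n where "n = inv k \<otimes> m"
  have "n \<in> inv\<^bsub>G Mod H\<^esub> C \<otimes>\<^bsub>G Mod H\<^esub> (C \<otimes>\<^bsub>G Mod H\<^esub> C')"
    unfolding n_def using mult_mem_FactGroup_mult[OF _ m(1)] FactGroup_inv_eq_image[OF C] k(1)
    by blast
  also have "\<dots> = C'"
    using C C' by (simp only: Q.m_assoc[symmetric] Q.inv_closed Q.l_inv Q.l_one)
  finally have n: "n \<in> C'" .
  have nG: "n \<in> carrier G"
    using n FactGroup_elem_subset[OF C'] by blast
  have "k \<otimes> n = m"
    using kG mG by (simp add: n_def m_assoc[symmetric])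
  then have "y \<in> f k ` (D (inv k) \<inter> D n)"
    using act_image_inter[OF kG nG] k(2) m(2) by simp
  then obtain x where x: "x \<in> D (inv k)" "x \<in> D n" and y: "y = f k x" by blast
  have "x \<in> quot_domain (inv\<^bsub>G Mod H\<^esub> C) \<inter> quot_domain C'"
    using quot_domain_inv[OF C] k(1) x n unfolding quot_domain_def by blast
  moreover have "quot_act C x = y"
    using quot_act_eq[OF C k(1) x(1)] y by simp
  ultimately show "y \<in> quot_act C ` (quot_domain (inv\<^bsub>G Mod H\<^esub> C) \<inter> quot_domain C')"
    by blast
qed

lemma quot_act_mult:
  assumes C: "C \<in> carrier (G Mod H)" and C': "C' \<in> carrier (G Mod H)"
    and x1: "x \<in> quot_domain (inv\<^bsub>G Mod H\<^esub> C')"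
    and x2: "x \<in> quot_domain (inv\<^bsub>G Mod H\<^esub> C' \<otimes>\<^bsub>G Mod H\<^esub> inv\<^bsub>G Mod H\<^esub> C)"
  shows "quot_act C (quot_act C' x) = quot_act (C \<otimes>\<^bsub>G Mod H\<^esub> C') x"
proof -
  interpret Q: group "G Mod H" by (rule factorgroup_is_group)
  have CC': "C \<otimes>\<^bsub>G Mod H\<^esub> C' \<in> carrier (G Mod H)"
    using Q.m_closed[OF C C'] .
  obtain k' where k': "k' \<in> C'" "x \<in> D (inv k')"
    using x1 quot_domain_inv[OF C'] by blast
  have "inv\<^bsub>G Mod H\<^esub> C' \<otimes>\<^bsub>G Mod H\<^esub> inv\<^bsub>G Mod H\<^esub> C = inv\<^bsub>G Mod H\<^esub> (C \<otimes>\<^bsub>G Mod H\<^esub> C')"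
    using Q.inv_mult_group[OF C C'] by simp
  then obtain m where m: "m \<in> C \<otimes>\<^bsub>G Mod H\<^esub> C'" "x \<in> D (inv m)"
    using x2 quot_domain_inv[OF CC'] by auto
  have k'G: "k' \<in> carrier G" and mG: "m \<in> carrier G"
    using k'(1) m(1) FactGroup_elem_subset[OF C'] FactGroup_elem_subset[OF CC'] by blast+
  define k where "k = m \<otimes> inv k'"
  have "k \<in> (C \<otimes>\<^bsub>G Mod H\<^esub> C') \<otimes>\<^bsub>G Mod H\<^esub> inv\<^bsub>G Mod H\<^esub> C'"
    unfolding k_def using mult_mem_FactGroup_mult[OF m(1)] FactGroup_inv_eq_image[OF C'] k'(1)
    by blast
  also have "\<dots> = C"
    using C C' by (simp only: Q.m_assoc Q.inv_closed Q.r_inv Q.r_one)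
  finally have k: "k \<in> C" .
  have kG: "k \<in> carrier G"
    using k FactGroup_elem_subset[OF C] by blast
  have m_eq: "m = k \<otimes> k'"
    using mG k'G by (simp add: k_def m_assoc)
  have "f k (f k' x) = f m x"
    using act_mult[OF kG k'G k'(2)] m(2) kG k'G by (simp add: m_eq inv_mult_group)
  moreover have "f k' x \<in> D (inv k)"
  proof -
    have "f k' x \<in> D k' \<inter> D (k' \<otimes> inv m)"
      using act_image_inter[OF k'G inv_closed[OF mG]] k'(2) m(2) by blast
    moreover have "k' \<otimes> inv m = inv k"
      using kG k'G by (simp add: m_eq inv_mult_group m_assoc[symmetric])
    ultimately show ?thesis by simp
  qed
  ultimately show ?thesis
    using quot_act_eq[OF C' k'] quot_act_eq[OF C k] quot_act_eq[OF CC' m] by simp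
qed

lemma partial_action_quot: "partial_action (G Mod H) S quot_domain quot_act"
  unfolding partial_action_def
proof (intro conjI ballI)
  fix C assume C: "C \<in> carrier (G Mod H)"
  show "quot_domain C \<subseteq> S"
    using domain_subset FactGroup_elem_subset[OF C] unfolding quot_domain_def by blast
  show "bij_betw (quot_act C) (quot_domain (inv\<^bsub>G Mod H\<^esub> C)) (quot_domain C)"
    using quot_act_bij[OF C] .
next
  show "quot_domain \<one>\<^bsub>G Mod H\<^esub> = S"
    using domain_subset[OF mem_carrier] domain_one one_closed
    unfolding one_FactGroup quot_domain_def by blast
next
  fix x assume x: "x \<in> S"
  show "quot_act \<one>\<^bsub>G Mod H\<^esub> x = x"
    using quot_act_eq[OF normal_in_FactGroup one_closed, of x] x domain_one act_one by simp
next
  fix C C' assume "C \<in> carrier (G Mod H)" "C' \<in> carrier (G Mod H)"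
  then show "quot_act C ` (quot_domain (inv\<^bsub>G Mod H\<^esub> C) \<inter> quot_domain C')
      = quot_domain C \<inter> quot_domain (C \<otimes>\<^bsub>G Mod H\<^esub> C')"
    by (rule quot_act_image_inter)
next
  fix C C' x assume "C \<in> carrier (G Mod H)" "C' \<in> carrier (G Mod H)"
    and "x \<in> quot_domain (inv\<^bsub>G Mod H\<^esub> C')
      \<inter> quot_domain (inv\<^bsub>G Mod H\<^esub> C' \<otimes>\<^bsub>G Mod H\<^esub> inv\<^bsub>G Mod H\<^esub> C)"
  then show "quot_act C (quot_act C' x) = quot_act (C \<otimes>\<^bsub>G Mod H\<^esub> C') x"
    using quot_act_mult by blast
qed

end

theorem mainTheorem3:
  fixes G :: "('g, 'm) monoid_scheme" and S :: "'x set"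
    and D :: "'g \<Rightarrow> 'x set" and f :: "'g \<Rightarrow> 'x \<Rightarrow> 'x" and H :: "'g set"
  assumes "group G" and "partial_action G S D f" and "normal H G"
  shows "(\<exists>E \<psi>. partial_action (G Mod H) S E \<psi> \<and>
            (\<forall>C\<in>carrier (G Mod H). E C = (\<Union>k\<in>C. D k) \<and>
                (\<forall>k\<in>C. \<forall>x\<in>D (inv\<^bsub>G\<^esub> k). \<psi> C x = f k x)))
         \<longleftrightarrow> (\<forall>h\<in>H. D h = D (inv\<^bsub>G\<^esub> h) \<and> (\<forall>x\<in>D (inv\<^bsub>G\<^esub> h). f h x = x))"
    (is "?induced \<longleftrightarrow> ?trivial")
proof
  assume ?induced
  then obtain E \<psi> where pa: "partial_action (G Mod H) S E \<psi>"
    and induced: "\<forall>C\<in>carrier (G Mod H). E C = (\<Union>k\<in>C. D k) \<and>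
                (\<forall>k\<in>C. \<forall>x\<in>D (inv\<^bsub>G\<^esub> k). \<psi> C x = f k x)"
    by (elim exE conjE)
  have "\<psi> H x = f k x" if "k \<in> H" "x \<in> D (inv\<^bsub>G\<^esub> k)" for k x
    using induced normal.normal_in_FactGroup[OF assms(3)] that by blast
  then show ?trivial
    using partial_group_action.trivial_on_normal_if_induced[OF _ assms(3) pa] assms(1,2)
    by (simp add: partial_group_action_def partial_group_action_axioms_def)
next
  assume ?trivial
  then interpret partial_action_mod_normal G S D f H
    by (intro partial_action_mod_normal.intro partial_group_action.intro
        partial_group_action_axioms.intro partial_action_mod_normal_axioms.intro assms) blast
  have "\<forall>C\<in>carrier (G Mod H). quot_domain C = (\<Union>k\<in>C. D k) \<and>
      (\<forall>k\<in>C. \<forall>x\<in>D (inv\<^bsub>G\<^esub> k). quot_act C x = f k x)"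
    by (simp add: quot_domain_def quot_act_eq)
  with partial_action_quot show ?induced by blast
qed

end
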